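(* Let $(R,\mathfrak{m})$ satisfy condition $\bigstar$ with residue field $\mathbb{F}_q$, and suppose $\rho=\dim_{\mathbb{F}_q}\big(\mathfrak{m}/(\mathfrak{m}^2+pR)\big)$ is finite. Then the number of maximal subrings of $R$ with the same residue field as $R$ equals $\dfrac{q^{\rho}-1}{q-1}$ (in particular, it is $0$ when $\rho=0$).
   Context: All rings are commutative and unital. Condition $\bigstar$ on a ring $(R,\mathfrak{m})$: $R$ is a local ring (unique maximal ideal $\mathfrak{m}$, not necessarily Noetherian) of characteristic $p^N$ for a prime $p$ and some $N\ge 1$, with finite residue field $R/\mathfrak{m}\cong\mathbb{F}_q$, and $\mathfrak{m}$ is a nilpotent ideal. $\mathfrak{m}/(\mathfrak{m}^2+pR)$ is an $R/\mathfrak{m}$-vector space. A subring $S$ is local with $\mathfrak{m}_S=\mathfrak{m}\cap S$, its residue field naturally a subfield of $R/\mathfrak{m}$; a "maximal subring with the same residue field as $R$" is a proper subring with residue field $\mathbb{F}_q$ not properly contained in any other proper subring. *)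

theory Defs
  imports Main "HOL-Computational_Algebra.Primes"
begin

text \<open>All notions are relative to the ring R = UNIV of a type 'a :: comm_ring_1.\<close>

definition is_ideal :: "'a::comm_ring_1 set \<Rightarrow> bool" where
  "is_ideal I \<longleftrightarrow> 0 \<in> I \<and> (\<forall>x\<in>I. \<forall>y\<in>I. x + y \<in> I) \<and> (\<forall>x\<in>I. \<forall>r. r * x \<in> I)"

definition is_maximal_ideal :: "'a::comm_ring_1 set \<Rightarrow> bool" where
  "is_maximal_ideal M \<longleftrightarrow> is_ideal M \<and> M \<noteq> UNIV \<and>
     (\<forall>J. is_ideal J \<and> M \<subseteq> J \<longrightarrow> J = M \<or> J = UNIV)"

definition is_local_with :: "'a::comm_ring_1 set \<Rightarrow> bool" where
  "is_local_with m \<longleftrightarrow> is_maximal_ideal m \<and> (\<forall>M. is_maximal_ideal M \<longrightarrow> M = m)"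

text \<open>Nilpotent ideal: some power m^n is zero, i.e. all products of n elements of m vanish.\<close>
definition nilpotent_ideal :: "'a::comm_ring_1 set \<Rightarrow> bool" where
  "nilpotent_ideal I \<longleftrightarrow> (\<exists>n>0. \<forall>f::nat \<Rightarrow> 'a. (\<forall>i<n. f i \<in> I) \<longrightarrow> (\<Prod>i<n. f i) = 0)"

definition residue_classes :: "'a::comm_ring_1 set \<Rightarrow> 'a set set" where
  "residue_classes m = range (\<lambda>x. {y. x - y \<in> m})"

definition sq_plus_p :: "'a::comm_ring_1 set \<Rightarrow> nat \<Rightarrow> 'a set" where
  "sq_plus_p m p = {x. \<exists>(n::nat) f g r. (\<forall>i<n. f i \<in> m \<and> g i \<in> m) \<and>
                         x = (\<Sum>i<n. f i * g i) + of_nat p * r}"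

text \<open>m/(m^2+pR) has dimension \<rho> as an R/m-vector space: there are e_0..e_{\<rho>-1} in m
  whose classes form a basis (spanning and linearly independent over R/m).\<close>
definition cotangent_dim :: "'a::comm_ring_1 set \<Rightarrow> nat \<Rightarrow> nat \<Rightarrow> bool" where
  "cotangent_dim m p \<rho> \<longleftrightarrow> (\<exists>e::nat \<Rightarrow> 'a. (\<forall>i<\<rho>. e i \<in> m) \<and>
     (\<forall>x\<in>m. \<exists>a. x - (\<Sum>i<\<rho>. a i * e i) \<in> sq_plus_p m p) \<and>
     (\<forall>a. (\<Sum>i<\<rho>. a i * e i) \<in> sq_plus_p m p \<longrightarrow> (\<forall>i<\<rho>. a i \<in> m)))"

definition is_subring :: "'a::comm_ring_1 set \<Rightarrow> bool" where
  "is_subring S \<longleftrightarrow> 0 \<in> S \<and> 1 \<in> S \<and> (\<forall>x\<in>S. \<forall>y\<in>S. x + y \<in> S \<and> x * y \<in> S) \<and>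
     (\<forall>x\<in>S. - x \<in> S)"

text \<open>The residue field of S (naturally a subfield of R/m) is all of R/m, i.e. S + m = R.\<close>
definition same_residue_field :: "'a::comm_ring_1 set \<Rightarrow> 'a set \<Rightarrow> bool" where
  "same_residue_field m S \<longleftrightarrow> (\<forall>x. \<exists>s\<in>S. x - s \<in> m)"

definition maximal_subring_same_residue :: "'a::comm_ring_1 set \<Rightarrow> 'a set \<Rightarrow> bool" where
  "maximal_subring_same_residue m S \<longleftrightarrow> is_subring S \<and> S \<noteq> UNIV \<and> same_residue_field m S \<and>
     \<not> (\<exists>T. is_subring T \<and> T \<noteq> UNIV \<and> S \<subset> T)"

end

theory Submission
  imports Defs "HOL-Library.FuncSet"
begin

text \<open>
  Since the residue field is finite, some power E of p induces the identity on it, and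
  x \<mapsto> x^E is additive modulo J = m^2 + pR and sends m into J. Hence for every ideal U with
  J \<subseteq> U \<subseteq> m the set {x. x^E - x \<in> U} is a subring with residue field F_q meeting m in U.
  Conversely a maximal subring S with that residue field contains J (otherwise S + J = R, and
  then S = R because m is nilpotent) and is recovered from S \<inter> m. So maximal subrings
  correspond to maximal proper subideals of m containing J, i.e. to the hyperplanes of the
  \<rho>-dimensional F_q-space m/J, of which there are (q^\<rho> - 1)/(q - 1): the nonzero coordinate
  vectors modulo nonzero scalars.
\<close>

section \<open>Ideals and subrings\<close>

lemma ideal_zero: "is_ideal I \<Longrightarrow> 0 \<in> I"
  by (simp add: is_ideal_def)

lemma ideal_add: "is_ideal I \<Longrightarrow> x \<in> I \<Longrightarrow> y \<in> I \<Longrightarrow> x + y \<in> I"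
  by (simp add: is_ideal_def)

lemma ideal_mult_left: "is_ideal I \<Longrightarrow> x \<in> I \<Longrightarrow> r * x \<in> I"
  by (simp add: is_ideal_def)

lemma ideal_mult_right: "is_ideal I \<Longrightarrow> x \<in> I \<Longrightarrow> x * r \<in> I"
  by (metis ideal_mult_left mult.commute)

lemma ideal_uminus: "is_ideal I \<Longrightarrow> x \<in> I \<Longrightarrow> - x \<in> I"
  using ideal_mult_left[of I x "- 1"] by simp

lemma ideal_diff: "is_ideal I \<Longrightarrow> x \<in> I \<Longrightarrow> y \<in> I \<Longrightarrow> x - y \<in> I"
  by (metis diff_conv_add_uminus ideal_add ideal_uminus)

lemma ideal_diff_mem_iff: "is_ideal I \<Longrightarrow> x - y \<in> I \<Longrightarrow> x \<in> I \<longleftrightarrow> y \<in> I"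
  using ideal_diff[of I x "x - y"] ideal_add[of I "x - y" y] by auto

lemma ideal_diff_trans: "is_ideal I \<Longrightarrow> x - y \<in> I \<Longrightarrow> y - z \<in> I \<Longrightarrow> x - z \<in> I"
  using ideal_add[of I "x - y" "y - z"] by simp

lemma ideal_diff_sym: "is_ideal I \<Longrightarrow> x - y \<in> I \<Longrightarrow> y - x \<in> I"
  by (metis ideal_uminus minus_diff_eq)

lemma ideal_sum: "is_ideal I \<Longrightarrow> (\<And>i. i \<in> A \<Longrightarrow> f i \<in> I) \<Longrightarrow> sum f A \<in> I"
  by (induction A rule: infinite_finite_induct) (auto intro: ideal_zero ideal_add)

lemma ideal_power_diff: "is_ideal I \<Longrightarrow> a - b \<in> I \<Longrightarrow> a ^ n - b ^ n \<in> I"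
proof (induction n)
  case (Suc n)
  have "a ^ Suc n - b ^ Suc n = a * (a ^ n - b ^ n) + (a - b) * b ^ n"
    by (simp add: algebra_simps)
  with Suc show ?case by (metis ideal_add ideal_mult_left ideal_mult_right)
qed (simp add: ideal_zero)

lemma is_ideal_add_multiples:
  assumes "is_ideal I"
  shows "is_ideal {u + r * e | u r. u \<in> I}"
  unfolding is_ideal_def
proof (intro conjI ballI allI)
  have "0 = 0 + 0 * e" by simp
  then show "0 \<in> {u + r * e | u r. u \<in> I}"
    using assms ideal_zero by blast
next
  fix x y assume "x \<in> {u + r * e | u r. u \<in> I}" "y \<in> {u + r * e | u r. u \<in> I}"
  then obtain u r u' r' where "x = u + r * e" "y = u' + r' * e" "u \<in> I" "u' \<in> I" by blast
  then have "x + y = (u + u') + (r + r') * e" "u + u' \<in> I"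
    using assms by (auto simp: algebra_simps intro: ideal_add)
  then show "x + y \<in> {u + r * e | u r. u \<in> I}" by blast
next
  fix x t assume "x \<in> {u + r * e | u r. u \<in> I}"
  then obtain u r where "x = u + r * e" "u \<in> I" by blast
  then have "t * x = t * u + (t * r) * e" "t * u \<in> I"
    using assms by (auto simp: algebra_simps intro: ideal_mult_left)
  then show "t * x \<in> {u + r * e | u r. u \<in> I}" by blast
qed

lemma subring_zero: "is_subring S \<Longrightarrow> 0 \<in> S"
  by (simp add: is_subring_def)

lemma subring_one: "is_subring S \<Longrightarrow> 1 \<in> S"
  by (simp add: is_subring_def)

lemma subring_add: "is_subring S \<Longrightarrow> x \<in> S \<Longrightarrow> y \<in> S \<Longrightarrow> x + y \<in> S"
  by (simp add: is_subring_def)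

lemma subring_mult: "is_subring S \<Longrightarrow> x \<in> S \<Longrightarrow> y \<in> S \<Longrightarrow> x * y \<in> S"
  by (simp add: is_subring_def)

lemma subring_uminus: "is_subring S \<Longrightarrow> x \<in> S \<Longrightarrow> - x \<in> S"
  by (simp add: is_subring_def)

lemma subring_diff: "is_subring S \<Longrightarrow> x \<in> S \<Longrightarrow> y \<in> S \<Longrightarrow> x - y \<in> S"
  by (metis diff_conv_add_uminus subring_add subring_uminus)

lemma subring_of_nat: "is_subring S \<Longrightarrow> of_nat n \<in> S"
  by (induction n) (auto simp: subring_zero subring_one subring_add)

lemma subring_power: "is_subring S \<Longrightarrow> x \<in> S \<Longrightarrow> x ^ n \<in> S"
  by (induction n) (auto simp: subring_one subring_mult)

lemma is_subring_add_ideal: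
  assumes S: "is_subring S" and I: "is_ideal I"
  shows "is_subring {s + j | s j. s \<in> S \<and> j \<in> I}"
  unfolding is_subring_def
proof (intro conjI ballI)
  show "0 \<in> {s + j | s j. s \<in> S \<and> j \<in> I}" "1 \<in> {s + j | s j. s \<in> S \<and> j \<in> I}"
    using S I by (force intro: subring_zero subring_one ideal_zero)+
next
  fix x y assume "x \<in> {s + j | s j. s \<in> S \<and> j \<in> I}" "y \<in> {s + j | s j. s \<in> S \<and> j \<in> I}"
  then obtain s j s' j' where xy: "x = s + j" "y = s' + j'" "s \<in> S" "j \<in> I" "s' \<in> S" "j' \<in> I"
    by blast
  have "x + y = (s + s') + (j + j')" "x * y = s * s' + (s * j' + s' * j + j * j')"
    using xy by (simp_all add: algebra_simps)
  moreover have "s + s' \<in> S" "s * s' \<in> S"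
    using xy S by (auto intro: subring_add subring_mult)
  moreover have "j + j' \<in> I" "s * j' + s' * j + j * j' \<in> I"
    using xy I by (auto intro!: ideal_add ideal_mult_left)
  ultimately show "x + y \<in> {s + j | s j. s \<in> S \<and> j \<in> I}"
    "x * y \<in> {s + j | s j. s \<in> S \<and> j \<in> I}" by blast+
next
  fix x assume "x \<in> {s + j | s j. s \<in> S \<and> j \<in> I}"
  then obtain s j where "x = s + j" "s \<in> S" "j \<in> I" by blast
  then have "- x = (- s) + (- j)" "- s \<in> S" "- j \<in> I"
    using S I by (auto intro: subring_uminus ideal_uminus)
  then show "- x \<in> {s + j | s j. s \<in> S \<and> j \<in> I}" by blast
qed

lemma card_eq_card_image_mult_fibres:
  assumes "finite A" and "\<And>b. b \<in> f ` A \<Longrightarrow> card {a \<in> A. f a = b} = k"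
  shows "card A = card (f ` A) * k"
proof -
  have "A = (\<Union>b\<in>f ` A. {a \<in> A. f a = b})"
    by auto
  also have "card \<dots> = (\<Sum>b\<in>f ` A. card {a \<in> A. f a = b})"
    using assms(1) by (intro card_UN_disjoint) auto
  also have "\<dots> = card (f ` A) * k"
    using assms(2) by simp
  finally show ?thesis .
qed

lemma sum_lessThan_add_split:
  fixes n n' :: nat
  shows "(\<Sum>i<n + n'. if i < n then f i else g (i - n)) = (\<Sum>i<n. f i) + (\<Sum>i<n'. g i)"
  by (induction n') (simp_all add: add.assoc)

section \<open>The binomial theorem modulo a prime\<close>

lemma add_power_prime_eq:
  fixes a b :: "'a::comm_ring_1"
  assumes p: "prime p"
  shows "\<exists>r. (a + b) ^ p = a ^ p + b ^ p + of_nat p * r"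
proof -
  define T where "T k = of_nat (p choose k) * a ^ k * b ^ (p - k)" for k
  have p1: "p \<ge> 1"
    using p prime_ge_1_nat by blast
  have "{..p} = insert 0 (insert p {1..<p})"
    using p1 by auto
  then have "(a + b) ^ p = T p + T 0 + (\<Sum>k\<in>{1..<p}. T k)"
    unfolding binomial_ring T_def[symmetric] using p1 by (simp add: algebra_simps)
  also have "(\<Sum>k\<in>{1..<p}. T k) = of_nat p * (\<Sum>k\<in>{1..<p}. of_nat ((p choose k) div p) * a ^ k * b ^ (p - k))"
    unfolding sum_distrib_left
  proof (rule sum.cong)
    fix k assume "k \<in> {1..<p}"
    then have "p choose k = p * ((p choose k) div p)"
      using p dvd_choose_prime by auto
    then show "T k = of_nat p * (of_nat ((p choose k) div p) * a ^ k * b ^ (p - k))"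
      unfolding T_def by (metis mult.assoc of_nat_mult)
  qed simp
  finally show ?thesis
    by (auto simp: T_def)
qed

lemma ideal_power_prime_diff:
  assumes I: "is_ideal I" and p: "prime p" and pI: "of_nat p \<in> I" and ab: "a - b \<in> I"
  shows "a ^ p - b ^ p \<in> I"
proof -
  obtain r where r: "(b + (a - b)) ^ p = b ^ p + (a - b) ^ p + of_nat p * r"
    using add_power_prime_eq p by blast
  have "(a - b) ^ p = (a - b) * (a - b) ^ (p - 1)"
    using p by (metis power_eq_if prime_gt_0_nat not_gr0)
  then have "(a - b) ^ p + of_nat p * r \<in> I"
    using I ab pI by (auto intro: ideal_add ideal_mult_right ideal_mult_left)
  then show ?thesis
    using r by (simp add: algebra_simps)
qed

lemma ideal_add_prime_power_power:
  assumes I: "is_ideal I" and p: "prime p" and pI: "of_nat p \<in> I"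
  shows "(a + b) ^ (p ^ f) - a ^ (p ^ f) - b ^ (p ^ f) \<in> I"
proof (induction f)
  case 0
  show ?case using I by (simp add: ideal_zero)
next
  case (Suc f)
  let ?X = "(a + b) ^ (p ^ f)" and ?A = "a ^ (p ^ f)" and ?B = "b ^ (p ^ f)"
  have "?X ^ p - (?A + ?B) ^ p \<in> I"
    using Suc by (intro ideal_power_prime_diff[OF I p pI]) (simp add: diff_diff_eq)
  moreover obtain r where "(?A + ?B) ^ p = ?A ^ p + ?B ^ p + of_nat p * r"
    using add_power_prime_eq p by blast
  ultimately have "?X ^ p - ?A ^ p - ?B ^ p - of_nat p * r \<in> I"
    by (simp add: algebra_simps)
  then have "?X ^ p - ?A ^ p - ?B ^ p \<in> I"
    using I pI by (metis diff_add_cancel ideal_add ideal_mult_right)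
  then show ?case
    by (simp add: power_mult[symmetric] mult.commute[of "p ^ f" p])
qed

section \<open>Powers of an ideal\<close>

text \<open>in_ideal_power I k x means x \<in> I^k; in particular I^0 is the whole ring.\<close>

inductive in_ideal_power :: "'a::comm_ring_1 set \<Rightarrow> nat \<Rightarrow> 'a \<Rightarrow> bool" for I where
  zero: "in_ideal_power I k 0"
| power_0: "in_ideal_power I 0 x"
| mult: "in_ideal_power I k x \<Longrightarrow> y \<in> I \<Longrightarrow> in_ideal_power I (Suc k) (x * y)"
| add: "in_ideal_power I k x \<Longrightarrow> in_ideal_power I k y \<Longrightarrow> in_ideal_power I k (x + y)"

lemma in_ideal_power_mult_left: "in_ideal_power I k x \<Longrightarrow> in_ideal_power I k (r * x)"
proof (induction rule: in_ideal_power.induct)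
  case (mult k x y)
  then show ?case using in_ideal_power.mult[of I k "r * x" y] by (simp add: mult.assoc)
next
  case (add k x y)
  then show ?case using in_ideal_power.add[of I k "r * x" "r * y"] by (simp add: distrib_left)
qed (simp_all add: in_ideal_power.zero in_ideal_power.power_0)

lemma in_ideal_power_mult:
  "in_ideal_power I b y \<Longrightarrow> in_ideal_power I a x \<Longrightarrow> in_ideal_power I (a + b) (x * y)"
proof (induction rule: in_ideal_power.induct)
  case (power_0 y)
  then show ?case using in_ideal_power_mult_left[of I a x y] by (simp add: mult.commute)
next
  case (mult k y z)
  then show ?case using in_ideal_power.mult[of I "a + k" "x * y" z] by (simp add: mult.assoc)
next
  case (add k y z)
  then show ?case using in_ideal_power.add[of I "a + k" "x * y" "x * z"] by (simp add: distrib_left)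
qed (simp add: in_ideal_power.zero)

lemma in_ideal_power_one: "y \<in> I \<Longrightarrow> in_ideal_power I 1 y"
  using in_ideal_power.mult[OF in_ideal_power.power_0[of I 1], of y] by simp

lemma in_ideal_power_sum:
  "(\<And>i. i \<in> A \<Longrightarrow> in_ideal_power I k (f i)) \<Longrightarrow> in_ideal_power I k (sum f A)"
  by (induction A rule: infinite_finite_induct) (simp_all add: in_ideal_power.zero in_ideal_power.add)

lemma in_ideal_power_Suc_mem:
  assumes "is_ideal I"
  shows "in_ideal_power I (Suc k) x \<Longrightarrow> x \<in> I"
proof (induction "Suc k" x arbitrary: k rule: in_ideal_power.induct)
  case zero
  then show ?case using assms by (rule ideal_zero)
next
  case (mult k x y)
  then show ?case using assms by (simp add: ideal_mult_left)
next
  case (add x y)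
  then show ?case using assms by (simp add: ideal_add)
qed

lemma nilpotent_ideal_power_eq_zero:
  assumes "nilpotent_ideal I"
  obtains n where "\<And>x. in_ideal_power I n x \<Longrightarrow> x = 0"
proof -
  obtain n where h: "\<forall>f::nat \<Rightarrow> 'a. (\<forall>i<n. f i \<in> I) \<longrightarrow> (\<Prod>i<n. f i) = 0"
    using assms unfolding nilpotent_ideal_def by blast
  have "in_ideal_power I k x \<Longrightarrow> k + j = n \<Longrightarrow> \<forall>i<j. g i \<in> I \<Longrightarrow> x * (\<Prod>i<j. g i) = 0"
    for k x j g
  proof (induction arbitrary: j g rule: in_ideal_power.induct)
    case (power_0 x)
    then show ?case using h by simp
  next
    case (mult k x y)
    then have "x * (\<Prod>i<Suc j. (g(j := y)) i) = 0"
      by (intro mult.IH) auto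
    then show ?case
      by (simp add: prod.lessThan_Suc algebra_simps)
  next
    case (add k x y)
    then show ?case by (simp add: distrib_right)
  qed simp
  from this[of n _ 0] show thesis
    by (intro that) simp
qed

section \<open>Rings satisfying condition \<open>\<star>\<close>\<close>

locale star_ring =
  fixes m :: "'a::comm_ring_1 set" and p :: nat
  assumes maximal: "is_maximal_ideal m"
    and prime: "prime p"
    and char_p_power: "\<exists>N. of_nat (p ^ N) = (0::'a)"
    and nilpotent: "nilpotent_ideal m"
    and finite_residue_field: "finite (residue_classes m)"
begin

abbreviation J :: "'a set" where
  "J \<equiv> sq_plus_p m p"

lemma m_ideal: "is_ideal m"
  using maximal by (simp add: is_maximal_ideal_def)

lemma one_notin_m: "1 \<notin> m"
proof
  assume "1 \<in> m"
  then have "x \<in> m" for x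
    using ideal_mult_left[OF m_ideal, of 1 x] by simp
  then show False
    using maximal by (auto simp: is_maximal_ideal_def)
qed

lemma unit_if_notin_m:
  assumes "x \<notin> m"
  obtains y where "x * y = 1"
proof -
  let ?I = "{a + r * x | a r. a \<in> m}"
  have "m \<subseteq> ?I"
  proof
    fix a assume "a \<in> m"
    moreover have "a = a + 0 * x" by simp
    ultimately show "a \<in> ?I" by blast
  qed
  moreover have "x \<in> ?I"
    by (intro CollectI exI[of _ 0] exI[of _ 1]) (simp add: ideal_zero[OF m_ideal])
  ultimately have "?I = UNIV"
    using maximal assms is_ideal_add_multiples[OF m_ideal] unfolding is_maximal_ideal_def by blast
  then obtain a r where ar: "1 = a + r * x" "a \<in> m"
    by blast
  obtain n where "\<forall>f::nat \<Rightarrow> 'a. (\<forall>i<n. f i \<in> m) \<longrightarrow> (\<Prod>i<n. f i) = 0"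
    using nilpotent unfolding nilpotent_ideal_def by blast
  then have "a ^ n = 0"
    using ar(2) by auto
  \<comment> \<open>r x = 1 - a is inverted by the geometric series of the nilpotent a\<close>
  then have "(1 - a) * (\<Sum>i<n. a ^ i) = 1"
    using one_diff_power_eq[of a n] by simp
  moreover have "1 - a = r * x"
    using ar(1) by (simp add: algebra_simps)
  ultimately show thesis
    by (intro that[of "r * (\<Sum>i<n. a ^ i)"]) (simp add: ac_simps)
qed

lemma mult_mem_m_iff:
  assumes "x \<notin> m"
  shows "x * y \<in> m \<longleftrightarrow> y \<in> m"
proof
  obtain z where "x * z = 1"
    using unit_if_notin_m assms by blast
  then have "z * (x * y) = y"
    by (metis mult.assoc mult.commute mult_1)
  then show "x * y \<in> m \<Longrightarrow> y \<in> m"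
    using ideal_mult_left[OF m_ideal, of "x * y" z] by simp
qed (rule ideal_mult_left[OF m_ideal])

lemma mem_m_if_power_mem_m: "x ^ n \<in> m \<Longrightarrow> x \<in> m"
  by (induction n) (auto simp: one_notin_m dest: mult_mem_m_iff)

lemma of_nat_p_mem_m: "of_nat p \<in> m"
proof -
  obtain N where "(of_nat p :: 'a) ^ N = 0"
    using char_p_power by (auto simp: of_nat_power)
  then show ?thesis
    using ideal_zero[OF m_ideal] mem_m_if_power_mem_m[of "of_nat p" N] by simp
qed

lemma mult_mem_J: "a \<in> m \<Longrightarrow> b \<in> m \<Longrightarrow> a * b \<in> J"
  unfolding sq_plus_p_def
  by (intro CollectI exI[of _ 1] exI[of _ "\<lambda>_. a"] exI[of _ "\<lambda>_. b"] exI[of _ 0]) auto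

lemma of_nat_p_mult_mem_J: "of_nat p * r \<in> J"
  unfolding sq_plus_p_def
  by (intro CollectI exI[of _ 0] exI[of _ "\<lambda>_. 0"] exI[of _ "\<lambda>_. 0"] exI[of _ r]) auto

lemma J_ideal: "is_ideal J"
  unfolding is_ideal_def
proof (intro conjI ballI allI)
  show "0 \<in> J"
    using of_nat_p_mult_mem_J[of 0] by simp
next
  fix x y assume "x \<in> J" "y \<in> J"
  obtain n f g r where
    x: "\<forall>i<(n::nat). f i \<in> m \<and> g i \<in> m" "x = (\<Sum>i<n. f i * g i) + of_nat p * r"
    using \<open>x \<in> J\<close> unfolding sq_plus_p_def by blast
  obtain n' f' g' r' where
    y: "\<forall>i<(n'::nat). f' i \<in> m \<and> g' i \<in> m" "y = (\<Sum>i<n'. f' i * g' i) + of_nat p * r'"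
    using \<open>y \<in> J\<close> unfolding sq_plus_p_def by blast
  define F where "F i = (if i < n then f i else f' (i - n))" for i
  define G where "G i = (if i < n then g i else g' (i - n))" for i
  have FG: "(\<lambda>i. F i * G i) = (\<lambda>i. if i < n then f i * g i else f' (i - n) * g' (i - n))"
    by (auto simp: F_def G_def)
  have "(\<Sum>i<n + n'. F i * G i) = (\<Sum>i<n. f i * g i) + (\<Sum>i<n'. f' i * g' i)"
    unfolding FG by (rule sum_lessThan_add_split)
  then have "x + y = (\<Sum>i<n + n'. F i * G i) + of_nat p * (r + r')"
    using x y by (simp add: algebra_simps)
  moreover have "\<forall>i<n + n'. F i \<in> m \<and> G i \<in> m"
    using x y by (auto simp: F_def G_def)
  ultimately show "x + y \<in> J"
    unfolding sq_plus_p_def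
    by (intro CollectI exI[of _ "n + n'"] exI[of _ F] exI[of _ G] exI[of _ "r + r'"]) simp
next
  fix x t assume "x \<in> J"
  then obtain n f g r where x: "\<forall>i<(n::nat). f i \<in> m \<and> g i \<in> m" "x = (\<Sum>i<n. f i * g i) + of_nat p * r"
    unfolding sq_plus_p_def by blast
  then have "t * x = (\<Sum>i<n. (t * f i) * g i) + of_nat p * (t * r)"
    by (simp add: algebra_simps sum_distrib_left)
  moreover have "\<forall>i<n. t * f i \<in> m \<and> g i \<in> m"
    using x ideal_mult_left[OF m_ideal] by auto
  ultimately show "t * x \<in> J"
    unfolding sq_plus_p_def
    by (intro CollectI exI[of _ n] exI[of _ "\<lambda>i. t * f i"] exI[of _ g] exI[of _ "t * r"]) simp
qed

lemma J_subset_m: "J \<subseteq> m"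
proof
  fix x assume "x \<in> J"
  then obtain n f g r where "\<forall>i<(n::nat). f i \<in> m \<and> g i \<in> m" "x = (\<Sum>i<n. f i * g i) + of_nat p * r"
    unfolding sq_plus_p_def by blast
  moreover have "(\<Sum>i<n. f i * g i) \<in> m"
    using calculation(1) by (intro ideal_sum[OF m_ideal]) (simp add: ideal_mult_right[OF m_ideal])
  ultimately show "x \<in> m"
    using ideal_add[OF m_ideal] ideal_mult_right[OF m_ideal of_nat_p_mem_m] by simp
qed

lemma in_ideal_power_two: "a \<in> m \<Longrightarrow> b \<in> m \<Longrightarrow> in_ideal_power m 2 (a * b)"
  using in_ideal_power_mult[OF in_ideal_power_one in_ideal_power_one, of b m a]
  by (simp add: numeral_2_eq_2)

context
  fixes S :: "'a set"
  assumes subring: "is_subring S"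
    and residue: "same_residue_field m S"
    and covers_mod_J: "\<And>x. \<exists>s\<in>S. x - s \<in> J"
begin

lemma subring_approx_mod_m2:
  assumes "y \<in> m"
  shows "\<exists>s\<in>S. in_ideal_power m 2 (y - s)"
proof -
  obtain s n f g r where s: "s \<in> S" "\<forall>i<(n::nat). f i \<in> m \<and> g i \<in> m"
    "y - s = (\<Sum>i<n. f i * g i) + of_nat p * r"
    using covers_mod_J[of y] unfolding sq_plus_p_def by blast
  obtain s' where s': "s' \<in> S" "r - s' \<in> m"
    using residue unfolding same_residue_field_def by blast
  have "in_ideal_power m 2 ((\<Sum>i<n. f i * g i) + of_nat p * (r - s'))"
    using s(2) s'(2) of_nat_p_mem_m
    by (intro in_ideal_power.add in_ideal_power_sum in_ideal_power_two) auto
  moreover have "(\<Sum>i<n. f i * g i) + of_nat p * (r - s') = y - (s + of_nat p * s')"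
    using s(3) by (simp add: algebra_simps)
  moreover have "s + of_nat p * s' \<in> S"
    using subring s s' by (intro subring_add subring_mult subring_of_nat)
  ultimately show ?thesis
    by metis
qed

lemma subring_approx_ideal_power_Suc:
  "in_ideal_power m k x \<Longrightarrow> \<exists>s\<in>S. in_ideal_power m (Suc k) (x - s)"
proof (induction rule: in_ideal_power.induct)
  case (zero k)
  then show ?case
    using subring_zero[OF subring] in_ideal_power.zero by force
next
  case (power_0 x)
  then obtain s where "s \<in> S" "x - s \<in> m"
    using residue unfolding same_residue_field_def by blast
  then show ?case
    using in_ideal_power_one by auto
next
  case (mult k x y)
  obtain s where s: "s \<in> S" "in_ideal_power m (Suc k) (x - s)"
    using mult.IH by blast
  obtain s' where s': "s' \<in> S" "in_ideal_power m 2 (y - s')"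
    using subring_approx_mod_m2 mult.hyps(2) by blast
  have "y - s' \<in> m"
    using in_ideal_power_Suc_mem[OF m_ideal, of 1] s'(2) by (simp add: numeral_2_eq_2)
  then have "s' \<in> m"
    using mult.hyps(2) ideal_diff_mem_iff[OF m_ideal] by blast
  have "in_ideal_power m (Suc (Suc k)) (x * (y - s') + (x - s) * s')"
    using in_ideal_power_mult[OF s'(2) mult.hyps(1)]
      in_ideal_power_mult[OF in_ideal_power_one[OF \<open>s' \<in> m\<close>] s(2)]
    by (intro in_ideal_power.add) simp_all
  moreover have "x * (y - s') + (x - s) * s' = x * y - s * s'"
    by (simp add: algebra_simps)
  ultimately show ?case
    using subring_mult[OF subring s(1) s'(1)] by metis
next
  case (add k x y)
  obtain s s' where "s \<in> S" "s' \<in> S" "in_ideal_power m (Suc k) (x - s)"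
    "in_ideal_power m (Suc k) (y - s')"
    using add.IH by blast
  moreover have "(x - s) + (y - s') = (x + y) - (s + s')"
    by simp
  ultimately show ?case
    using subring_add[OF subring] in_ideal_power.add by metis
qed

lemma subring_approx_ideal_power: "\<exists>s\<in>S. in_ideal_power m k (x - s)"
proof (induction k)
  case 0
  then show ?case
    using subring_zero[OF subring] in_ideal_power.power_0 by blast
next
  case (Suc k)
  then obtain s s' where "s \<in> S" "s' \<in> S" "in_ideal_power m (Suc k) ((x - s) - s')"
    using subring_approx_ideal_power_Suc by blast
  moreover have "(x - s) - s' = x - (s + s')"
    by simp
  ultimately show ?case
    using subring_add[OF subring] by metis
qed

text \<open>S approximates every element modulo every power of m, and m is nilpotent.\<close>

lemma subring_covering_mod_J_eq_UNIV: "S = UNIV"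
proof -
  obtain n where n: "\<And>x. in_ideal_power m n x \<Longrightarrow> x = 0"
    using nilpotent_ideal_power_eq_zero[OF nilpotent] by blast
  have "x \<in> S" for x
    using subring_approx_ideal_power[of n x] n by force
  then show ?thesis
    by blast
qed

end

section \<open>Residue representatives and a Frobenius exponent\<close>

text \<open>The class m is represented by 0, so that 0 \<in> reps.\<close>

definition rep :: "'a \<Rightarrow> 'a" where
  "rep x = (if x \<in> m then 0 else SOME y. x - y \<in> m)"

definition reps :: "'a set" where
  "reps = range rep"

lemma rep_cong: "x - rep x \<in> m"
  using someI[of "\<lambda>y. x - y \<in> m" x] ideal_zero[OF m_ideal] by (simp add: rep_def)

lemma rep_eq_iff: "rep x = rep y \<longleftrightarrow> x - y \<in> m"
proof
  assume "rep x = rep y"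
  then have "x - y = (x - rep x) - (y - rep y)"
    by simp
  then show "x - y \<in> m"
    using rep_cong ideal_diff[OF m_ideal] by metis
next
  assume xy: "x - y \<in> m"
  then have "x - z \<in> m \<longleftrightarrow> y - z \<in> m" for z
    using ideal_diff_mem_iff[OF m_ideal, of "x - z" "y - z"] by simp
  moreover have "x \<in> m \<longleftrightarrow> y \<in> m"
    using ideal_diff_mem_iff[OF m_ideal xy] .
  ultimately show "rep x = rep y"
    by (simp add: rep_def)
qed

lemma rep_eq_0_iff: "rep x = 0 \<longleftrightarrow> x \<in> m"
  using rep_eq_iff[of x 0] ideal_zero[OF m_ideal] by (simp add: rep_def)

lemma rep_reps: "y \<in> reps \<Longrightarrow> rep y = y"
  unfolding reps_def using rep_eq_iff rep_cong ideal_diff_sym[OF m_ideal] by blast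

lemma rep_mem_reps: "rep x \<in> reps"
  by (simp add: reps_def)

lemma zero_mem_reps: "0 \<in> reps"
  using rep_mem_reps rep_eq_0_iff ideal_zero[OF m_ideal] by metis

lemma reps_notin_m: "y \<in> reps \<Longrightarrow> y \<noteq> 0 \<Longrightarrow> y \<notin> m"
  using rep_reps rep_eq_0_iff by metis

lemma reps_eq_iff: "y \<in> reps \<Longrightarrow> z \<in> reps \<Longrightarrow> y = z \<longleftrightarrow> y - z \<in> m"
  using rep_reps rep_eq_iff by metis

lemma bij_betw_reps_residue_classes: "bij_betw (\<lambda>y. {z. y - z \<in> m}) reps (residue_classes m)"
proof -
  have "{z. x - z \<in> m} = {z. rep x - z \<in> m}" for x
    using rep_cong ideal_diff_trans[OF m_ideal] ideal_diff_sym[OF m_ideal] by blast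
  then have "residue_classes m = (\<lambda>y. {z. y - z \<in> m}) ` reps"
    unfolding residue_classes_def reps_def by auto
  moreover have "inj_on (\<lambda>y. {z. y - z \<in> m}) reps"
    using reps_eq_iff ideal_zero[OF m_ideal] by (intro inj_onI) (metis mem_Collect_eq right_minus_eq)
  ultimately show ?thesis
    by (simp add: bij_betw_def)
qed

lemma finite_reps: "finite reps"
  using bij_betw_finite[OF bij_betw_reps_residue_classes] finite_residue_field by blast

lemma card_reps: "card reps = card (residue_classes m)"
  using bij_betw_same_card[OF bij_betw_reps_residue_classes] .

lemma card_reps_ge_2: "card reps \<ge> 2"
proof -
  have "rep 1 \<noteq> 0"
    using rep_eq_0_iff one_notin_m by blast
  then have "card {0, rep 1} = 2"
    by simp
  moreover have "{0, rep 1} \<subseteq> reps"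
    using zero_mem_reps rep_mem_reps by auto
  ultimately show ?thesis
    using card_mono[OF finite_reps] by metis
qed

lemma diff_mem_m_if_power_prime_diff_mem_m:
  assumes "a ^ p - b ^ p \<in> m"
  shows "a - b \<in> m"
proof -
  obtain r where r: "(b + (a - b)) ^ p = b ^ p + (a - b) ^ p + of_nat p * r"
    using add_power_prime_eq prime by blast
  have "(a - b) ^ p = (a ^ p - b ^ p) - of_nat p * r"
    using r by (simp add: algebra_simps)
  then have "(a - b) ^ p \<in> m"
    using assms of_nat_p_mem_m m_ideal by (metis ideal_diff ideal_mult_right)
  then show ?thesis
    by (rule mem_m_if_power_mem_m)
qed

lemma diff_mem_m_if_power_prime_power_diff_mem_m:
  "a ^ (p ^ f) - b ^ (p ^ f) \<in> m \<Longrightarrow> a - b \<in> m"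
proof (induction f arbitrary: a b)
  case (Suc f)
  then have "(a ^ p) ^ (p ^ f) - (b ^ p) ^ (p ^ f) \<in> m"
    by (simp add: power_mult[symmetric])
  then show ?case
    using Suc.IH diff_mem_m_if_power_prime_diff_mem_m by blast
qed simp

text \<open>Pigeonhole on the iterates of Frobenius, viewed as maps of the finite residue field.\<close>

lemma exists_frobenius_exponent: "\<exists>f\<ge>1. \<forall>x. x ^ (p ^ f) - x \<in> m"
proof -
  define g where "g j = restrict (\<lambda>x. rep (x ^ (p ^ j))) reps" for j
  have "range g \<subseteq> Pi\<^sub>E reps (\<lambda>_. reps)"
    unfolding g_def by (auto simp: rep_mem_reps)
  then have "finite (range g)"
    using finite_reps by (simp add: finite_PiE finite_subset)
  then have "\<not> inj g"
    using finite_imageD infinite_UNIV_nat by blast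
  then obtain a b where ab: "a < b" "g a = g b"
    unfolding inj_def by (metis linorder_neq_iff)
  have "x - x ^ (p ^ (b - a)) \<in> m" for x
  proof -
    have "rep ((rep x) ^ (p ^ a)) = rep ((rep x) ^ (p ^ b))"
      using fun_cong[OF ab(2), of "rep x"] by (simp add: g_def rep_mem_reps)
    then have "(rep x) ^ (p ^ a) - (rep x) ^ (p ^ b) \<in> m"
      by (simp add: rep_eq_iff)
    moreover have "x ^ n - (rep x) ^ n \<in> m" for n
      using ideal_power_diff[OF m_ideal rep_cong] .
    ultimately have "x ^ (p ^ a) - x ^ (p ^ b) \<in> m"
      using m_ideal by (meson ideal_diff_sym ideal_diff_trans)
    moreover have "x ^ (p ^ b) = (x ^ (p ^ (b - a))) ^ (p ^ a)"
      using ab(1) by (simp add: power_mult[symmetric] power_add[symmetric])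
    ultimately show ?thesis
      using diff_mem_m_if_power_prime_power_diff_mem_m by simp
  qed
  then show ?thesis
    using ab(1) ideal_diff_sym[OF m_ideal] by (intro exI[of _ "b - a"]) auto
qed

definition frob_exp :: nat where
  "frob_exp = p ^ (SOME f. f \<ge> 1 \<and> (\<forall>x. x ^ (p ^ f) - x \<in> m))"

lemma frob_exp_ge_2: "frob_exp \<ge> 2"
  and power_frob_exp_cong: "x ^ frob_exp - x \<in> m"
proof -
  define f where "f = (SOME f. f \<ge> 1 \<and> (\<forall>x. x ^ (p ^ f) - x \<in> m))"
  have f: "f \<ge> 1" "\<forall>x. x ^ (p ^ f) - x \<in> m"
    unfolding f_def using someI_ex[OF exists_frobenius_exponent] by blast+
  have E: "frob_exp = p ^ f"
    unfolding frob_exp_def f_def ..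
  have "p \<le> p ^ f"
    using f(1) prime_gt_0_nat[OF prime] by (simp add: self_le_power)
  then show "frob_exp \<ge> 2"
    using prime_ge_2_nat[OF prime] E by simp
  show "x ^ frob_exp - x \<in> m"
    using f(2) E by simp
qed

lemma add_power_frob_exp: "(a + b) ^ frob_exp - a ^ frob_exp - b ^ frob_exp \<in> J"
  using ideal_add_prime_power_power[OF J_ideal prime] of_nat_p_mult_mem_J[of 1]
  by (simp add: frob_exp_def)

lemma power_frob_exp_mem_J: "x \<in> m \<Longrightarrow> x ^ frob_exp \<in> J"
  using frob_exp_ge_2 mult_mem_J ideal_mult_left[OF J_ideal]
  by (metis le_add_diff_inverse2 power_add power2_eq_square)

lemma power_frob_exp_diff_mem_J:
  assumes "a - b \<in> m"
  shows "a ^ frob_exp - b ^ frob_exp \<in> J"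
proof -
  have "(b + (a - b)) ^ frob_exp - b ^ frob_exp - (a - b) ^ frob_exp + (a - b) ^ frob_exp \<in> J"
    using ideal_add[OF J_ideal add_power_frob_exp power_frob_exp_mem_J[OF assms]] .
  then show ?thesis
    by simp
qed

section \<open>Maximal subrings and maximal subideals of m\<close>

definition frob_subring :: "'a set \<Rightarrow> 'a set" where
  "frob_subring U = {x. x ^ frob_exp - x \<in> U}"

lemma frob_subring_mono: "U \<subseteq> V \<Longrightarrow> frob_subring U \<subseteq> frob_subring V"
  by (auto simp: frob_subring_def)

lemma frob_subring_m: "frob_subring m = UNIV"
  using power_frob_exp_cong by (auto simp: frob_subring_def)

lemma is_subring_frob_subring:
  assumes U: "is_ideal U" and JU: "J \<subseteq> U"
  shows "is_subring (frob_subring U)"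
  unfolding is_subring_def
proof (intro conjI ballI)
  have "frob_exp > 0"
    using frob_exp_ge_2 by simp
  then show "0 \<in> frob_subring U" "1 \<in> frob_subring U"
    using ideal_zero[OF U] by (simp_all add: frob_subring_def power_0_left)
next
  fix x y assume "x \<in> frob_subring U" "y \<in> frob_subring U"
  then have x: "x ^ frob_exp - x \<in> U" and y: "y ^ frob_exp - y \<in> U"
    by (auto simp: frob_subring_def)
  have "((x + y) ^ frob_exp - x ^ frob_exp - y ^ frob_exp) + (x ^ frob_exp - x) + (y ^ frob_exp - y) \<in> U"
    using ideal_add[OF U ideal_add[OF U subsetD[OF JU add_power_frob_exp] x] y] .
  then show "x + y \<in> frob_subring U"
    by (simp add: frob_subring_def algebra_simps)
  have "(x ^ frob_exp - x) * y ^ frob_exp + x * (y ^ frob_exp - y) \<in> U"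
    using ideal_add[OF U ideal_mult_right[OF U x] ideal_mult_left[OF U y]] .
  then show "x * y \<in> frob_subring U"
    by (simp add: frob_subring_def algebra_simps power_mult_distrib)
next
  fix x assume "x \<in> frob_subring U"
  then have x: "x ^ frob_exp - x \<in> U"
    by (simp add: frob_subring_def)
  have "(x + - x) ^ frob_exp - x ^ frob_exp - (- x) ^ frob_exp \<in> U"
    using subsetD[OF JU add_power_frob_exp] .
  then have "- (x ^ frob_exp) - (- x) ^ frob_exp \<in> U"
    using frob_exp_ge_2 by (simp add: power_0_left)
  then have "- (- (x ^ frob_exp) - (- x) ^ frob_exp) - (x ^ frob_exp - x) \<in> U"
    using ideal_diff[OF U ideal_uminus[OF U] x] by blast
  then show "- x \<in> frob_subring U"
    by (simp add: frob_subring_def algebra_simps)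
qed

lemma same_residue_field_frob_subring:
  assumes "J \<subseteq> U"
  shows "same_residue_field m (frob_subring U)"
  unfolding same_residue_field_def
proof
  fix x
  have "x ^ frob_exp \<in> frob_subring U"
    using power_frob_exp_diff_mem_J[OF power_frob_exp_cong] assms
    by (auto simp: frob_subring_def)
  moreover have "x - x ^ frob_exp \<in> m"
    using power_frob_exp_cong ideal_diff_sym[OF m_ideal] by blast
  ultimately show "\<exists>s\<in>frob_subring U. x - s \<in> m"
    by blast
qed

lemma frob_subring_Int_m:
  assumes U: "is_ideal U" and JU: "J \<subseteq> U" and Um: "U \<subseteq> m"
  shows "frob_subring U \<inter> m = U"
proof -
  have "x \<in> frob_subring U \<longleftrightarrow> x \<in> U" if "x \<in> m" for x
  proof -
    have xE: "x ^ frob_exp \<in> U"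
      using power_frob_exp_mem_J[OF that] JU by blast
    show ?thesis
    proof
      assume "x \<in> frob_subring U"
      then have "x ^ frob_exp - (x ^ frob_exp - x) \<in> U"
        using ideal_diff[OF U xE] by (simp only: frob_subring_def mem_Collect_eq)
      then show "x \<in> U"
        by simp
    qed (simp add: frob_subring_def ideal_diff[OF U xE])
  qed
  then show ?thesis
    using Um by blast
qed

lemma frob_subring_neq_UNIV:
  assumes "is_ideal U" "J \<subseteq> U" "U \<subseteq> m" "U \<noteq> m"
  shows "frob_subring U \<noteq> UNIV"
  using frob_subring_Int_m[OF assms(1-3)] assms(4) by auto

context
  fixes S :: "'a set"
  assumes subring: "is_subring S"
    and J_subset: "J \<subseteq> S"
    and residue: "same_residue_field m S"
begin

lemma subring_eq_frob_subring: "S = frob_subring (S \<inter> m)"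
proof (intro equalityI subsetI)
  fix x assume "x \<in> S"
  then show "x \<in> frob_subring (S \<inter> m)"
    using subring power_frob_exp_cong by (simp add: frob_subring_def subring_diff subring_power)
next
  fix x assume "x \<in> frob_subring (S \<inter> m)"
  then have x: "x ^ frob_exp - x \<in> S"
    by (simp add: frob_subring_def)
  obtain s where s: "s \<in> S" "x - s \<in> m"
    using residue unfolding same_residue_field_def by blast
  have "(x ^ frob_exp - s ^ frob_exp) + s ^ frob_exp \<in> S"
    using subring_add[OF subring subsetD[OF J_subset power_frob_exp_diff_mem_J[OF s(2)]]
        subring_power[OF subring s(1)]] .
  then have "x ^ frob_exp \<in> S"
    by simp
  from subring_diff[OF subring this x] show "x \<in> S"
    by simp
qed

lemma is_ideal_subring_Int_m: "is_ideal (S \<inter> m)"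
  unfolding is_ideal_def
proof (intro conjI ballI allI)
  show "0 \<in> S \<inter> m"
    using subring_zero[OF subring] ideal_zero[OF m_ideal] by simp
next
  fix x y assume "x \<in> S \<inter> m" "y \<in> S \<inter> m"
  then show "x + y \<in> S \<inter> m"
    using subring_add[OF subring] ideal_add[OF m_ideal] by auto
next
  fix x r assume x: "x \<in> S \<inter> m"
  obtain s where s: "s \<in> S" "r - s \<in> m"
    using residue unfolding same_residue_field_def by blast
  have "s * x + (r - s) * x \<in> S"
    using x subring_add[OF subring subring_mult[OF subring s(1)] subsetD[OF J_subset mult_mem_J[OF s(2)]]]
    by blast
  then show "r * x \<in> S \<inter> m"
    using x ideal_mult_left[OF m_ideal, of x r] by (simp add: algebra_simps)
qed

end

text \<open>Otherwise S + (m^2 + pR) would be a proper subring strictly containing S.\<close>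

lemma J_subset_maximal_subring:
  assumes "maximal_subring_same_residue m S"
  shows "J \<subseteq> S"
proof -
  have S: "is_subring S" "S \<noteq> UNIV" "same_residue_field m S"
    and maximal: "\<nexists>T. is_subring T \<and> T \<noteq> UNIV \<and> S \<subset> T"
    using assms unfolding maximal_subring_same_residue_def by auto
  define T where "T = {s + j | s j. s \<in> S \<and> j \<in> J}"
  have "s \<in> T" if "s \<in> S" for s
    unfolding T_def using that ideal_zero[OF J_ideal] by (intro CollectI exI[of _ s] exI[of _ 0]) simp
  moreover have "j \<in> T" if "j \<in> J" for j
    unfolding T_def using that subring_zero[OF S(1)] by (intro CollectI exI[of _ 0] exI[of _ j]) simp
  moreover have "T \<noteq> UNIV"
  proof
    assume "T = UNIV"
    have "\<exists>s\<in>S. x - s \<in> J" for x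
    proof -
      obtain s j where "x = s + j" "s \<in> S" "j \<in> J"
        using \<open>T = UNIV\<close> unfolding T_def by blast
      then show ?thesis
        by force
    qed
    then show False
      using subring_covering_mod_J_eq_UNIV S by blast
  qed
  moreover have "is_subring T"
    unfolding T_def using is_subring_add_ideal[OF S(1) J_ideal] .
  ultimately have "S = T"
    using maximal by blast
  then show ?thesis
    using \<open>\<And>j. j \<in> J \<Longrightarrow> j \<in> T\<close> by blast
qed

definition maximal_subideals :: "'a set set" where
  "maximal_subideals = {U. is_ideal U \<and> J \<subseteq> U \<and> U \<subseteq> m \<and> U \<noteq> m \<and>
     (\<forall>V. is_ideal V \<and> U \<subseteq> V \<and> V \<subseteq> m \<longrightarrow> V = U \<or> V = m)}"

lemma maximal_subring_Int_m:
  assumes "maximal_subring_same_residue m S"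
  shows "S \<inter> m \<in> maximal_subideals" and "S = frob_subring (S \<inter> m)"
proof -
  have S: "is_subring S" "S \<noteq> UNIV" "same_residue_field m S"
    and maximal: "\<nexists>T. is_subring T \<and> T \<noteq> UNIV \<and> S \<subset> T"
    using assms unfolding maximal_subring_same_residue_def by auto
  have JS: "J \<subseteq> S"
    using J_subset_maximal_subring[OF assms] .
  show S_eq: "S = frob_subring (S \<inter> m)"
    using subring_eq_frob_subring[OF S(1) JS S(3)] .
  have "S \<inter> m \<noteq> m"
    using S_eq frob_subring_m S(2) by force
  moreover have "V = S \<inter> m" if V: "is_ideal V" "S \<inter> m \<subseteq> V" "V \<subseteq> m" "V \<noteq> m" for V
  proof -
    have JV: "J \<subseteq> V"
      using JS J_subset_m V(2) by blast
    have "S \<subseteq> frob_subring V"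
      using S_eq frob_subring_mono[OF V(2)] by blast
    then have "frob_subring V = S"
      using maximal is_subring_frob_subring[OF V(1) JV] frob_subring_neq_UNIV[OF V(1) JV V(3,4)]
      by blast
    then show ?thesis
      using frob_subring_Int_m[OF V(1) JV V(3)] by simp
  qed
  ultimately show "S \<inter> m \<in> maximal_subideals"
    unfolding maximal_subideals_def
    using is_ideal_subring_Int_m[OF S(1) JS S(3)] JS J_subset_m by blast
qed

lemma maximal_subring_frob_subring:
  assumes "U \<in> maximal_subideals"
  shows "maximal_subring_same_residue m (frob_subring U)"
proof -
  have U: "is_ideal U" "J \<subseteq> U" "U \<subseteq> m" "U \<noteq> m"
    and maximal: "\<And>V. is_ideal V \<Longrightarrow> U \<subseteq> V \<Longrightarrow> V \<subseteq> m \<Longrightarrow> V = U \<or> V = m"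
    using assms unfolding maximal_subideals_def by auto
  have "\<not> (is_subring T \<and> T \<noteq> UNIV \<and> frob_subring U \<subset> T)" for T
  proof
    assume T: "is_subring T \<and> T \<noteq> UNIV \<and> frob_subring U \<subset> T"
    have UT: "U \<subseteq> T \<inter> m"
      using T frob_subring_Int_m[OF U(1-3)] U(3) by blast
    have JT: "J \<subseteq> T" and residue: "same_residue_field m T"
      using T UT U(2) same_residue_field_frob_subring[OF U(2)]
      unfolding same_residue_field_def by blast+
    have T_eq: "T = frob_subring (T \<inter> m)"
      using subring_eq_frob_subring JT residue T by blast
    from maximal[OF is_ideal_subring_Int_m[OF _ JT residue] UT]
    have "T \<inter> m = U \<or> T \<inter> m = m"
      using T by blast
    then show False
      using T T_eq frob_subring_m by auto
  qed
  then show ?thesis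
    unfolding maximal_subring_same_residue_def
    using is_subring_frob_subring[OF U(1,2)] frob_subring_neq_UNIV[OF U]
      same_residue_field_frob_subring[OF U(2)] by blast
qed

lemma maximal_subrings_eq_image:
  "{S. maximal_subring_same_residue m S} = frob_subring ` maximal_subideals"
  using maximal_subring_Int_m maximal_subring_frob_subring by blast

lemma inj_on_frob_subring: "inj_on frob_subring maximal_subideals"
  by (rule inj_on_inverseI[where g = "\<lambda>S. S \<inter> m"])
    (auto simp: maximal_subideals_def frob_subring_Int_m)

end

section \<open>Counting hyperplanes\<close>

locale star_ring_with_basis = star_ring +
  fixes \<rho> :: nat and e :: "nat \<Rightarrow> 'a"
  assumes basis_mem_m: "\<And>i. i < \<rho> \<Longrightarrow> e i \<in> m"
    and basis_spans: "\<And>x. x \<in> m \<Longrightarrow> \<exists>a. x - (\<Sum>i<\<rho>. a i * e i) \<in> J"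
    and basis_independent: "\<And>a j. (\<Sum>i<\<rho>. a i * e i) \<in> J \<Longrightarrow> j < \<rho> \<Longrightarrow> a j \<in> m"
begin

definition pairing :: "(nat \<Rightarrow> 'a) \<Rightarrow> (nat \<Rightarrow> 'a) \<Rightarrow> 'a" where
  "pairing c a = (\<Sum>i<\<rho>. a i * c i)"

lemma pairing_commute: "pairing c a = pairing a c"
  by (simp add: pairing_def mult.commute)

lemma pairing_add: "pairing c (\<lambda>i. a i + b i) = pairing c a + pairing c b"
  by (simp add: pairing_def distrib_right sum.distrib)

lemma pairing_diff: "pairing c (\<lambda>i. a i - b i) = pairing c a - pairing c b"
  by (simp add: pairing_def left_diff_distrib sum_subtractf)

lemma pairing_mult: "pairing c (\<lambda>i. r * a i) = r * pairing c a"
  by (simp add: pairing_def sum_distrib_left mult.assoc)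

lemma pairing_unit_vector:
  assumes "j < \<rho>"
  shows "pairing c (\<lambda>i. if i = j then 1 else 0) = c j"
proof -
  have "pairing c (\<lambda>i. if i = j then 1 else 0) = (\<Sum>i<\<rho>. if i = j then c i else 0)"
    unfolding pairing_def by (rule sum.cong) auto
  then show ?thesis
    using assms by simp
qed

lemma pairing_mem_ideal: "is_ideal I \<Longrightarrow> (\<And>i. i < \<rho> \<Longrightarrow> c i \<in> I) \<Longrightarrow> pairing c a \<in> I"
  unfolding pairing_def by (auto intro: ideal_sum ideal_mult_left)

lemma pairing_basis_spans: "x \<in> m \<Longrightarrow> \<exists>a. x - pairing e a \<in> J"
  using basis_spans by (simp add: pairing_def)

lemma pairing_cong:
  assumes "x - pairing e a \<in> J" and "x - pairing e b \<in> J"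
  shows "pairing c a - pairing c b \<in> m"
proof -
  have "pairing e (\<lambda>i. a i - b i) \<in> J"
    using ideal_diff[OF J_ideal assms(2,1)] by (simp add: pairing_diff)
  then have "a i - b i \<in> m" if "i < \<rho>" for i
    using basis_independent that by (simp add: pairing_def)
  then have "pairing (\<lambda>i. a i - b i) c \<in> m"
    by (rule pairing_mem_ideal[OF m_ideal])
  then show ?thesis
    by (simp add: pairing_commute[of _ c] pairing_diff)
qed

text \<open>The preimage in m of the hyperplane of m/(m^2 + pR) cut out by the coordinates c.\<close>

definition hyperplane :: "(nat \<Rightarrow> 'a) \<Rightarrow> 'a set" where
  "hyperplane c = {x \<in> m. \<exists>a. x - pairing e a \<in> J \<and> pairing c a \<in> m}"

lemma mem_hyperplane_iff:
  assumes a: "x - pairing e a \<in> J"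
  shows "x \<in> hyperplane c \<longleftrightarrow> pairing c a \<in> m"
proof
  assume "x \<in> hyperplane c"
  then obtain b where "x - pairing e b \<in> J" "pairing c b \<in> m"
    unfolding hyperplane_def by blast
  then show "pairing c a \<in> m"
    using pairing_cong[OF a] ideal_diff_mem_iff[OF m_ideal] by blast
next
  assume "pairing c a \<in> m"
  moreover have "x \<in> m"
    using ideal_diff_mem_iff[OF m_ideal subsetD[OF J_subset_m a]]
      pairing_mem_ideal[OF m_ideal, of e a] basis_mem_m by blast
  ultimately show "x \<in> hyperplane c"
    using a unfolding hyperplane_def by blast
qed

lemma hyperplane_subset_m: "hyperplane c \<subseteq> m"
  by (auto simp: hyperplane_def)

lemma J_subset_hyperplane: "J \<subseteq> hyperplane c"
proof
  fix x assume "x \<in> J"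
  moreover have "pairing e (\<lambda>_. 0) = 0" "pairing c (\<lambda>_. 0) = 0"
    by (simp_all add: pairing_def)
  ultimately show "x \<in> hyperplane c"
    using mem_hyperplane_iff[of x "\<lambda>_. 0" c] ideal_zero[OF m_ideal] by simp
qed

lemma is_ideal_hyperplane: "is_ideal (hyperplane c)"
  unfolding is_ideal_def
proof (intro conjI ballI allI)
  show "0 \<in> hyperplane c"
    using J_subset_hyperplane ideal_zero[OF J_ideal] by blast
next
  fix x y assume x: "x \<in> hyperplane c" and y: "y \<in> hyperplane c"
  obtain a b where a: "x - pairing e a \<in> J" and b: "y - pairing e b \<in> J"
    using pairing_basis_spans x y hyperplane_subset_m by blast
  have "(x + y) - pairing e (\<lambda>i. a i + b i) \<in> J"
    using ideal_add[OF J_ideal a b] by (simp add: pairing_add algebra_simps)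
  moreover have "pairing c (\<lambda>i. a i + b i) \<in> m"
    using x y a b mem_hyperplane_iff by (simp add: pairing_add ideal_add[OF m_ideal])
  ultimately show "x + y \<in> hyperplane c"
    using mem_hyperplane_iff by blast
next
  fix x r assume x: "x \<in> hyperplane c"
  obtain a where a: "x - pairing e a \<in> J"
    using pairing_basis_spans x hyperplane_subset_m by blast
  have "r * x - pairing e (\<lambda>i. r * a i) \<in> J"
    using ideal_mult_left[OF J_ideal a, of r] by (simp add: pairing_mult algebra_simps)
  moreover have "pairing c (\<lambda>i. r * a i) \<in> m"
    using x a mem_hyperplane_iff by (simp add: pairing_mult ideal_mult_left[OF m_ideal])
  ultimately show "r * x \<in> hyperplane c"
    using mem_hyperplane_iff by blast
qed

lemma basis_mem_hyperplane_iff: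
  assumes "j < \<rho>"
  shows "e j \<in> hyperplane c \<longleftrightarrow> c j \<in> m"
proof -
  have "e j - pairing e (\<lambda>i. if i = j then 1 else 0) \<in> J"
    using pairing_unit_vector[OF assms] ideal_zero[OF J_ideal] by simp
  then show ?thesis
    using mem_hyperplane_iff[of "e j" _ c] pairing_unit_vector[OF assms, of c] by simp
qed

lemma hyperplane_mem_maximal_subideals:
  assumes i: "i < \<rho>" "c i \<notin> m"
  shows "hyperplane c \<in> maximal_subideals"
proof -
  have "V = m" if V: "is_ideal V" "hyperplane c \<subseteq> V" "V \<subseteq> m" "V \<noteq> hyperplane c" for V
  proof -
    obtain y where y: "y \<in> V" "y \<notin> hyperplane c"
      using V by blast
    obtain b where b: "y - pairing e b \<in> J"
      using pairing_basis_spans y V(3) by blast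
    obtain \<beta> where \<beta>: "pairing c b * \<beta> = 1"
      using y(2) mem_hyperplane_iff[OF b] unit_if_notin_m by blast
    have "x \<in> V" if x: "x \<in> m" for x
    proof -
      obtain a where a: "x - pairing e a \<in> J"
        using pairing_basis_spans x by blast
      define \<gamma> where "\<gamma> = pairing c a * \<beta>"
      have "\<gamma> * pairing c b = pairing c a"
        unfolding \<gamma>_def using \<beta> by (metis mult.assoc mult.commute mult_1)
      then have \<gamma>: "pairing c (\<lambda>i. a i - \<gamma> * b i) = 0"
        by (simp add: pairing_diff pairing_mult)
      have "(x - \<gamma> * y) - pairing e (\<lambda>i. a i - \<gamma> * b i) = (x - pairing e a) - \<gamma> * (y - pairing e b)"
        by (simp add: pairing_diff pairing_mult algebra_simps)
      also have "\<dots> \<in> J"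
        using ideal_diff[OF J_ideal a ideal_mult_left[OF J_ideal b]] .
      finally have "x - \<gamma> * y \<in> hyperplane c"
        using mem_hyperplane_iff \<gamma> ideal_zero[OF m_ideal] by simp
      then have "x - \<gamma> * y \<in> V"
        using V(2) by blast
      from ideal_add[OF V(1) this ideal_mult_left[OF V(1) y(1), of \<gamma>]] show ?thesis
        by simp
    qed
    then show ?thesis
      using V(3) by blast
  qed
  moreover have "hyperplane c \<noteq> m"
    using basis_mem_hyperplane_iff[OF i(1)] basis_mem_m[OF i(1)] i(2) by blast
  ultimately show ?thesis
    unfolding maximal_subideals_def
    using is_ideal_hyperplane J_subset_hyperplane hyperplane_subset_m by auto
qed

definition coords :: "(nat \<Rightarrow> 'a) set" where
  "coords = Pi\<^sub>E {..<\<rho>} (\<lambda>_. reps)"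

definition nonzero_coords :: "(nat \<Rightarrow> 'a) set" where
  "nonzero_coords = {c \<in> coords. \<exists>i<\<rho>. c i \<noteq> 0}"

lemma coords_mem_reps: "c \<in> coords \<Longrightarrow> i < \<rho> \<Longrightarrow> c i \<in> reps"
  unfolding coords_def by auto

lemma nonzero_coordsE:
  assumes "c \<in> nonzero_coords"
  obtains i where "i < \<rho>" "c i \<notin> m"
  using assms reps_notin_m coords_mem_reps unfolding nonzero_coords_def by blast

lemma maximal_subideal_basis_notin:
  assumes "U \<in> maximal_subideals"
  obtains i where "i < \<rho>" "e i \<notin> U"
proof -
  have U: "is_ideal U" "J \<subseteq> U" "U \<subseteq> m" "U \<noteq> m"
    using assms unfolding maximal_subideals_def by auto
  have "\<exists>i<\<rho>. e i \<notin> U"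
  proof (rule ccontr)
    assume "\<not> (\<exists>i<\<rho>. e i \<notin> U)"
    then have "pairing e a \<in> U" for a
      by (intro pairing_mem_ideal[OF U(1)]) blast
    then have "x \<in> U" if "x \<in> m" for x
      using pairing_basis_spans[OF that] U(2) ideal_diff_mem_iff[OF U(1)] by blast
    then show False
      using U(3,4) by blast
  qed
  then show thesis
    using that by blast
qed

text \<open>Modulo U, which has codimension one in m, every basis vector is a multiple of e i.\<close>

lemma maximal_subideal_basis_multiples:
  assumes "U \<in> maximal_subideals" and i: "i < \<rho>" "e i \<notin> U"
  obtains c where "c \<in> coords" and "\<And>j. j < \<rho> \<Longrightarrow> e j - c j * e i \<in> U"
proof -
  have U: "is_ideal U" "J \<subseteq> U" "U \<subseteq> m"
    and maximal: "\<And>V. is_ideal V \<Longrightarrow> U \<subseteq> V \<Longrightarrow> V \<subseteq> m \<Longrightarrow> V = U \<or> V = m"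
    using assms unfolding maximal_subideals_def by auto
  let ?V = "{u + r * e i | u r. u \<in> U}"
  have "U \<subseteq> ?V"
    by (force intro: exI[of _ 0])
  moreover have "?V \<subseteq> m"
    using U(3) basis_mem_m[OF i(1)] ideal_add[OF m_ideal] ideal_mult_left[OF m_ideal] by blast
  moreover have "e i \<in> ?V"
    by (intro CollectI exI[of _ 0] exI[of _ 1]) (simp add: ideal_zero[OF U(1)])
  ultimately have "?V = m"
    using maximal[OF is_ideal_add_multiples[OF U(1)]] i(2) by blast
  have "\<exists>r. e j - r * e i \<in> U" if j: "j < \<rho>" for j
  proof -
    obtain u r where "e j = u + r * e i" "u \<in> U"
      using basis_mem_m[OF j] \<open>?V = m\<close> by blast
    then show ?thesis
      by (intro exI[of _ r]) simp
  qed
  then obtain r where r: "\<And>j. j < \<rho> \<Longrightarrow> e j - r j * e i \<in> U"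
    by metis
  define c where "c = restrict (\<lambda>j. rep (r j)) {..<\<rho>}"
  have c_multiples: "e j - c j * e i \<in> U" if j: "j < \<rho>" for j
  proof -
    have "(r j - rep (r j)) * e i \<in> U"
      using mult_mem_J[OF rep_cong basis_mem_m[OF i(1)]] U(2) by blast
    from ideal_add[OF U(1) r[OF j] this] show ?thesis
      using j by (simp add: c_def algebra_simps)
  qed
  have "c \<in> coords"
    unfolding c_def coords_def by (simp add: rep_mem_reps)
  from that[OF this c_multiples] show thesis .
qed

lemma diff_pairing_mult_basis_mem:
  assumes U: "is_ideal U" "J \<subseteq> U" and c: "\<And>j. j < \<rho> \<Longrightarrow> e j - c j * e i \<in> U"
    and a: "x - pairing e a \<in> J"
  shows "x - pairing c a * e i \<in> U"
proof -
  have "pairing e a - pairing c a * e i = pairing (\<lambda>j. e j - c j * e i) a"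
    by (simp add: pairing_def sum_subtractf sum_distrib_left right_diff_distrib ac_simps)
  also have "\<dots> \<in> U"
    using c by (intro pairing_mem_ideal[OF U(1)])
  finally show ?thesis
    using ideal_add[OF U(1) subsetD[OF U(2) a]] by fastforce
qed

lemma maximal_subideal_eq_hyperplane:
  assumes U_max: "U \<in> maximal_subideals"
  obtains c where "c \<in> nonzero_coords" and "U = hyperplane c"
proof -
  have U: "is_ideal U" "J \<subseteq> U" "U \<subseteq> m" "U \<noteq> m"
    and maximal: "\<And>V. is_ideal V \<Longrightarrow> U \<subseteq> V \<Longrightarrow> V \<subseteq> m \<Longrightarrow> V = U \<or> V = m"
    using U_max unfolding maximal_subideals_def by auto
  obtain i where i: "i < \<rho>" "e i \<notin> U"
    using maximal_subideal_basis_notin[OF U_max] .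
  obtain c where c: "c \<in> coords" "\<And>j. j < \<rho> \<Longrightarrow> e j - c j * e i \<in> U"
    by (rule maximal_subideal_basis_multiples[OF U_max i]) blast
  have congr: "x - pairing c a * e i \<in> U" if "x - pairing e a \<in> J" for x a
    using U(1,2) c(2) that by (rule diff_pairing_mult_basis_mem)
  have "U \<subseteq> hyperplane c"
  proof
    fix x assume x: "x \<in> U"
    obtain a where a: "x - pairing e a \<in> J"
      using pairing_basis_spans x U(3) by blast
    have "pairing c a * e i \<in> U"
      using ideal_diff_mem_iff[OF U(1) congr[OF a]] x by blast
    then have "pairing c a \<in> m"
      using i(2) unit_if_notin_m ideal_mult_left[OF U(1)] by (metis mult.assoc mult.commute mult_1)
    then show "x \<in> hyperplane c"
      using mem_hyperplane_iff[OF a] by blast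
  qed
  moreover have "\<exists>j<\<rho>. c j \<notin> m"
  proof (rule ccontr)
    assume "\<not> (\<exists>j<\<rho>. c j \<notin> m)"
    then have "pairing c a * e i \<in> U" for a
      using pairing_mem_ideal[OF m_ideal, of c a] mult_mem_J basis_mem_m[OF i(1)] U(2) by blast
    then have "x \<in> U" if "x \<in> m" for x
      using pairing_basis_spans[OF that] congr ideal_diff_mem_iff[OF U(1)] by blast
    then show False
      using U(3,4) by blast
  qed
  then have "c \<in> nonzero_coords" and "hyperplane c \<noteq> m"
    using c(1) basis_mem_hyperplane_iff basis_mem_m ideal_zero[OF m_ideal]
    unfolding nonzero_coords_def by force+
  ultimately show thesis
    using that maximal[OF is_ideal_hyperplane _ hyperplane_subset_m] by blast
qed

lemma maximal_subideals_eq_image: "maximal_subideals = hyperplane ` nonzero_coords"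
proof (intro equalityI subsetI)
  fix U assume "U \<in> maximal_subideals"
  then obtain c where "c \<in> nonzero_coords" "U = hyperplane c"
    by (rule maximal_subideal_eq_hyperplane)
  then show "U \<in> hyperplane ` nonzero_coords"
    by blast
next
  fix U assume "U \<in> hyperplane ` nonzero_coords"
  then obtain c where c: "c \<in> nonzero_coords" "U = hyperplane c"
    by blast
  obtain i where "i < \<rho>" "c i \<notin> m"
    using c(1) by (rule nonzero_coordsE)
  then show "U \<in> maximal_subideals"
    using hyperplane_mem_maximal_subideals c(2) by blast
qed

definition scale :: "'a \<Rightarrow> (nat \<Rightarrow> 'a) \<Rightarrow> nat \<Rightarrow> 'a" where
  "scale l c = restrict (\<lambda>i. rep (l * c i)) {..<\<rho>}"

lemma pairing_restrict: "pairing (restrict c {..<\<rho>}) a = pairing c a"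
  by (simp add: pairing_def)

lemma scale_mem_nonzero_coords:
  assumes c: "c \<in> nonzero_coords" and l: "l \<in> reps" "l \<noteq> 0"
  shows "scale l c \<in> nonzero_coords"
proof -
  obtain i where i: "i < \<rho>" "c i \<notin> m"
    using c by (rule nonzero_coordsE)
  have "l * c i \<notin> m"
    using mult_mem_m_iff reps_notin_m[OF l] i(2) by blast
  then have "scale l c i \<noteq> 0"
    using i(1) rep_eq_0_iff by (simp add: scale_def)
  then show ?thesis
    using i(1) unfolding nonzero_coords_def coords_def scale_def by (auto simp: rep_mem_reps)
qed

lemma hyperplane_scale:
  assumes "l \<notin> m"
  shows "hyperplane (scale l c) = hyperplane c"
proof -
  have pairing_scale: "pairing (scale l c) a - l * pairing c a \<in> m" for a
  proof -
    have "pairing (scale l c) a - l * pairing c a = pairing (\<lambda>i. rep (l * c i) - l * c i) a"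
      by (simp add: scale_def pairing_restrict pairing_def sum_subtractf sum_distrib_left
          right_diff_distrib ac_simps)
    also have "\<dots> \<in> m"
      by (rule pairing_mem_ideal[OF m_ideal]) (rule ideal_diff_sym[OF m_ideal rep_cong])
    finally show ?thesis .
  qed
  have "x \<in> hyperplane (scale l c) \<longleftrightarrow> x \<in> hyperplane c" if x: "x \<in> m" for x
  proof -
    obtain a where a: "x - pairing e a \<in> J"
      using pairing_basis_spans[OF x] by blast
    show ?thesis
      unfolding mem_hyperplane_iff[OF a] ideal_diff_mem_iff[OF m_ideal pairing_scale]
      using mult_mem_m_iff[OF assms] .
  qed
  then show ?thesis
    using hyperplane_subset_m by blast
qed

lemma hyperplane_eq_cross_mem_m:
  assumes eq: "hyperplane d = hyperplane c" and i: "i < \<rho>" and j: "j < \<rho>"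
  shows "c i * d j - c j * d i \<in> m"
proof -
  define a where "a = (\<lambda>k. c i * (if k = j then 1 else 0) - c j * (if k = i then 1 else 0))"
  have pairing_a: "pairing b a = c i * b j - c j * b i" for b
    unfolding a_def pairing_diff pairing_mult pairing_unit_vector[OF i] pairing_unit_vector[OF j] ..
  have x: "(c i * e j - c j * e i) - pairing e a \<in> J"
    using ideal_zero[OF J_ideal] by (simp add: pairing_a)
  have "pairing c a \<in> m"
    using ideal_zero[OF m_ideal] by (simp add: pairing_a mult.commute)
  then show ?thesis
    using mem_hyperplane_iff[OF x] eq pairing_a by metis
qed

lemma eq_scaleI:
  assumes d: "d \<in> coords" and d_l: "\<And>j. j < \<rho> \<Longrightarrow> d j - l * c j \<in> m"
  shows "d = scale l c"
proof (rule PiE_ext)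
  show "d \<in> Pi\<^sub>E {..<\<rho>} (\<lambda>_. reps)" "scale l c \<in> Pi\<^sub>E {..<\<rho>} (\<lambda>_. reps)"
    using d by (auto simp: coords_def scale_def rep_mem_reps)
  fix j assume j: "j \<in> {..<\<rho>}"
  have "d j = rep (d j)"
    using rep_reps[OF coords_mem_reps[OF d]] j by simp
  also have "\<dots> = rep (l * c j)"
    using d_l j rep_eq_iff by simp
  finally show "d j = scale l c j"
    using j by (simp add: scale_def)
qed

lemma hyperplane_eq_imp_scale:
  assumes c: "c \<in> nonzero_coords" and d: "d \<in> nonzero_coords" and eq: "hyperplane d = hyperplane c"
  obtains l where "l \<in> reps" "l \<noteq> 0" "d = scale l c"
proof -
  obtain i where i: "i < \<rho>" "c i \<notin> m"
    using c by (rule nonzero_coordsE)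
  obtain c' where c': "c i * c' = 1"
    using unit_if_notin_m[OF i(2)] by blast
  define l where "l = rep (d i * c')"
  have d_l: "d j - l * c j \<in> m" if j: "j < \<rho>" for j
  proof -
    have "d i * c' - l \<in> m"
      unfolding l_def by (rule rep_cong)
    then have "c' * (c i * d j - c j * d i) + (d i * c' - l) * c j \<in> m"
      using ideal_add[OF m_ideal ideal_mult_left[OF m_ideal hyperplane_eq_cross_mem_m[OF eq i(1) j]]
          ideal_mult_right[OF m_ideal]] by blast
    moreover have "c' * (c i * d j - c j * d i) + (d i * c' - l) * c j = (c i * c') * d j - l * c j"
      by (simp add: algebra_simps)
    ultimately show ?thesis
      using c' by simp
  qed
  have "d = scale l c"
    using d d_l by (intro eq_scaleI) (simp add: nonzero_coords_def)
  moreover have "l \<noteq> 0"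
  proof
    assume "l = 0"
    then have "d j \<in> m" if "j < \<rho>" for j
      using d_l[OF that] by simp
    then show False
      using d by (auto elim: nonzero_coordsE)
  qed
  moreover have "l \<in> reps"
    unfolding l_def by (rule rep_mem_reps)
  ultimately show thesis
    using that by blast
qed

lemma inj_on_scale:
  assumes "c \<in> nonzero_coords"
  shows "inj_on (\<lambda>l. scale l c) (reps - {0})"
proof (rule inj_onI)
  fix l l' assume l: "l \<in> reps - {0}" "l' \<in> reps - {0}" and eq: "scale l c = scale l' c"
  obtain i where i: "i < \<rho>" "c i \<notin> m"
    using assms by (rule nonzero_coordsE)
  have "rep (l * c i) = rep (l' * c i)"
    using fun_cong[OF eq, of i] i(1) by (simp add: scale_def)
  then have "c i * (l - l') \<in> m"
    by (simp add: rep_eq_iff algebra_simps)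
  then show "l = l'"
    using mult_mem_m_iff[OF i(2)] reps_eq_iff l by blast
qed

lemma card_hyperplane_fibre:
  assumes c: "c \<in> nonzero_coords"
  shows "card {d \<in> nonzero_coords. hyperplane d = hyperplane c} = card reps - 1"
proof -
  have "{d \<in> nonzero_coords. hyperplane d = hyperplane c} = (\<lambda>l. scale l c) ` (reps - {0})"
  proof (intro equalityI subsetI)
    fix d assume "d \<in> {d \<in> nonzero_coords. hyperplane d = hyperplane c}"
    then obtain l where "l \<in> reps" "l \<noteq> 0" "d = scale l c"
      using hyperplane_eq_imp_scale[OF c] by blast
    then show "d \<in> (\<lambda>l. scale l c) ` (reps - {0})"
      by blast
  next
    fix d assume "d \<in> (\<lambda>l. scale l c) ` (reps - {0})"
    then obtain l where "l \<in> reps" "l \<noteq> 0" "d = scale l c"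
      by blast
    then show "d \<in> {d \<in> nonzero_coords. hyperplane d = hyperplane c}"
      using scale_mem_nonzero_coords[OF c] hyperplane_scale reps_notin_m by simp
  qed
  then show ?thesis
    using card_image[OF inj_on_scale[OF c]] zero_mem_reps finite_reps by simp
qed

lemma card_nonzero_coords: "card nonzero_coords = card reps ^ \<rho> - 1"
proof -
  define z :: "nat \<Rightarrow> 'a" where "z = restrict (\<lambda>_. 0) {..<\<rho>}"
  have z: "z \<in> coords"
    unfolding z_def coords_def using zero_mem_reps by simp
  have "(\<exists>i<\<rho>. c i \<noteq> 0) \<longleftrightarrow> c \<noteq> z" if c: "c \<in> coords" for c
  proof
    show "\<exists>i<\<rho>. c i \<noteq> 0 \<Longrightarrow> c \<noteq> z"
      by (auto simp: z_def)
    show "c \<noteq> z \<Longrightarrow> \<exists>i<\<rho>. c i \<noteq> 0"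
      using PiE_ext[of c "{..<\<rho>}" "\<lambda>_. reps" z] c z by (auto simp: coords_def z_def)
  qed
  then have "nonzero_coords = coords - {z}"
    unfolding nonzero_coords_def by blast
  moreover have "card coords = card reps ^ \<rho>"
    unfolding coords_def by (simp add: card_PiE)
  ultimately show ?thesis
    using z finite_reps by (simp add: coords_def finite_PiE)
qed

lemma card_maximal_subideals:
  "finite maximal_subideals \<and> card maximal_subideals * (card reps - 1) = card reps ^ \<rho> - 1"
proof -
  have "finite nonzero_coords"
    using finite_reps by (simp add: nonzero_coords_def coords_def finite_PiE)
  moreover have "card nonzero_coords = card maximal_subideals * (card reps - 1)"
    unfolding maximal_subideals_eq_image
    using card_hyperplane_fibre calculation by (intro card_eq_card_image_mult_fibres) auto
  ultimately show ?thesis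
    using card_nonzero_coords by (simp add: maximal_subideals_eq_image)
qed

end

theorem corollary31:
  fixes m :: "'a::comm_ring_1 set" and p N q \<rho> :: nat
  assumes "is_local_with m"
    and "prime p" and "N \<ge> 1" and "CHAR('a) = p ^ N"
    and "finite (residue_classes m)" and "card (residue_classes m) = q"
    and "nilpotent_ideal m"
    and "cotangent_dim m p \<rho>"
  shows "finite {S. maximal_subring_same_residue m S} \<and>
         card {S. maximal_subring_same_residue m S} = (q ^ \<rho> - 1) div (q - 1)"
proof -
  have "of_nat (p ^ N) = (0::'a)"
    using assms(4) of_nat_CHAR[where 'a = 'a] by simp
  moreover have "is_maximal_ideal m"
    using assms(1) by (simp add: is_local_with_def)
  ultimately interpret star_ring m p
    using assms(2,5,7) by unfold_locales blast+
  obtain e where e: "\<forall>i<\<rho>. e i \<in> m" "\<forall>x\<in>m. \<exists>a. x - (\<Sum>i<\<rho>. a i * e i) \<in> J"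
    "\<forall>a. (\<Sum>i<\<rho>. a i * e i) \<in> J \<longrightarrow> (\<forall>i<\<rho>. a i \<in> m)"
    using assms(8) unfolding cotangent_dim_def by blast
  interpret star_ring_with_basis m p \<rho> e
    using e by unfold_locales blast+
  have q: "card reps = q"
    using card_reps assms(6) by simp
  have "card {S. maximal_subring_same_residue m S} = card maximal_subideals"
    unfolding maximal_subrings_eq_image using card_image[OF inj_on_frob_subring] .
  also have "\<dots> = card maximal_subideals * (q - 1) div (q - 1)"
    using card_reps_ge_2 q by simp
  also have "\<dots> = (q ^ \<rho> - 1) div (q - 1)"
    using card_maximal_subideals q by simp
  finally show ?thesis
    using card_maximal_subideals maximal_subrings_eq_image by simp
qed

end
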